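(* For all real $\alpha,\beta$ with $\beta\neq0$, all integers $n,m\ge0$ and every real $x$, \[ P_{n+m}^{(\alpha,\beta)}(x)=\sum_{j=0}^{n}\sum_{k=0}^{m}\binom{n}{j}\langle m-\beta k\rangle_{n-j}\,S_{\alpha,\beta}(m,k)\,x^kP_j^{(\alpha,\beta)}(x). \] In particular (case $m=1$), \[ P_{n+1}^{(\alpha,\beta)}(x)=-\sum_{j=0}^{n}\binom{n}{j}\Big(\alpha\,(n-j)!+\beta x\,\langle1-\beta\rangle_{n-j}\Big)P_j^{(\alpha,\beta)}(x). \]
   Context: For real $a$ and integer $n\ge 1$, $\langle a\rangle_n:=a(a+1)\cdots(a+n-1)$ and $\langle a\rangle_0:=1$. For real $\alpha,\beta$ and integers $0\le k\le n$, $S_{\alpha,\beta}(n,k):=\frac{1}{k!}\sum_{j=0}^{k}(-1)^{k-j}\binom{k}{j}\langle-\alpha-\beta j\rangle_n$. For real $\alpha,\beta$ with $\beta\neq0$, the polynomials $P_n^{(\alpha,\beta)}(x)$ are defined by $\sum_{n\ge0}P_n^{(\alpha,\beta)}(x)\frac{t^n}{n!}=(1-t)^{\alpha}\exp\big(x((1-t)^{\beta}-1)\big)$ (formal power series in $t$). *)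

theory Defs
  imports Complex_Main "HOL-Computational_Algebra.Formal_Power_Series"
begin

definition S_ab :: "real \<Rightarrow> real \<Rightarrow> nat \<Rightarrow> nat \<Rightarrow> real" where
  "S_ab \<alpha> \<beta> n k = (1 / fact k) *
     (\<Sum>j=0..k. (-1) ^ (k - j) * real (k choose j) * pochhammer (- \<alpha> - \<beta> * real j) n)"

definition one_minus_t_pow :: "real \<Rightarrow> real fps" where
  "one_minus_t_pow a = fps_binomial a oo (- fps_X)"

definition P_gf :: "real \<Rightarrow> real \<Rightarrow> real \<Rightarrow> real fps" where
  "P_gf \<alpha> \<beta> x = one_minus_t_pow \<alpha> * (fps_exp x oo (one_minus_t_pow \<beta> - 1))"

definition P_poly :: "real \<Rightarrow> real \<Rightarrow> nat \<Rightarrow> real \<Rightarrow> real" where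
  "P_poly \<alpha> \<beta> n x = fact n * (fps_nth (P_gf \<alpha> \<beta> x) n)"

end

theory Submission
  imports Defs
begin

text \<open>
  The generating function F = (1-t)^\<alpha> exp(x((1-t)^\<beta> - 1)) satisfies F' = F L with
  L = -\<alpha>(1-t)^(-1) - \<beta>x(1-t)^(\<beta>-1). Hence the m-th derivative of F is Q_m F with
  Q_m = \<Sum>_k S(m,k) x^k (1-t)^(\<beta>k-m): the step Q_(m+1) = Q_m' + Q_m L is exactly the
  two-term recurrence of S(m,k), which holds because k! S(m,k) is the k-th forward difference
  at 0 of j \<mapsto> \<langle>-\<alpha>-\<beta>j\<rangle>_m. Since (1-t)^c has coefficients \<langle>-c\<rangle>_i / i!, extracting
  the coefficient of t^n from Q_m F gives P_(n+m); the case m = 1 is the second formula.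
\<close>

unbundle fps_syntax

definition forward_difference :: "nat \<Rightarrow> (nat \<Rightarrow> 'a::comm_ring_1) \<Rightarrow> 'a" where
  "forward_difference k f = (\<Sum>j=0..k. (-1) ^ (k - j) * of_nat (k choose j) * f j)"

lemma forward_difference_const:
  assumes "k > 0"
  shows "forward_difference k (\<lambda>_. c) = 0"
proof -
  have "(\<Sum>j\<le>k. of_nat (k choose j) * 1 ^ j * (-1) ^ (k - j)) = (1 + (-1) :: 'a) ^ k"
    by (rule binomial_ring[symmetric])
  then show ?thesis
    using assms
    by (simp add: forward_difference_def atMost_atLeast0 mult_ac power_0_left flip: sum_distrib_left)
qed

lemma forward_difference_linear:
  "forward_difference k (\<lambda>j. a * f j + b * g j)
     = a * forward_difference k f + b * forward_difference k g"
  by (simp add: forward_difference_def algebra_simps sum.distrib sum_distrib_left)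

lemma forward_difference_weighted_Suc:
  "forward_difference (Suc k) (\<lambda>j. (of_nat (Suc k) - of_nat j) * f j)
     = - of_nat (Suc k) * forward_difference k f"
proof -
  have absorb: "(of_nat (Suc k) - of_nat j) * of_nat (Suc k choose j)
      = (of_nat (Suc k) * of_nat (k choose j) :: 'a)"
    if "j \<le> k" for j
    using binomial_absorb_comp[of "Suc k" j] that
    by (metis diff_Suc_1 le_SucI of_nat_diff of_nat_mult)
  have "forward_difference (Suc k) (\<lambda>j. (of_nat (Suc k) - of_nat j) * f j)
      = (\<Sum>j=0..k. (-1) ^ (Suc k - j) * ((of_nat (Suc k) - of_nat j) * of_nat (Suc k choose j)) * f j)"
    by (simp add: forward_difference_def mult_ac)
  also have "\<dots> = (\<Sum>j=0..k. - of_nat (Suc k) * ((-1) ^ (k - j) * of_nat (k choose j) * f j))"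
  proof (rule sum.cong[OF refl])
    fix j assume "j \<in> {0..k}"
    then have "j \<le> k" by simp
    then show "(-1) ^ (Suc k - j) * ((of_nat (Suc k) - of_nat j) * of_nat (Suc k choose j)) * f j
        = - of_nat (Suc k) * ((-1) ^ (k - j) * of_nat (k choose j) * f j)"
      by (simp only: absorb Suc_diff_le power_Suc) (simp add: algebra_simps)
  qed
  finally show ?thesis
    by (simp add: forward_difference_def sum_distrib_left)
qed

lemma S_ab_eq_forward_difference:
  "S_ab \<alpha> \<beta> m k = forward_difference k (\<lambda>j. pochhammer (- \<alpha> - \<beta> * real j) m) / fact k"
  by (simp add: S_ab_def forward_difference_def)

lemma S_ab_Suc_0: "S_ab \<alpha> \<beta> (Suc m) 0 = (real m - \<alpha>) * S_ab \<alpha> \<beta> m 0"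
  by (simp add: S_ab_def pochhammer_Suc algebra_simps)

lemma S_ab_Suc_Suc:
  "S_ab \<alpha> \<beta> (Suc m) (Suc k) =
     (real m - \<alpha> - \<beta> * real (Suc k)) * S_ab \<alpha> \<beta> m (Suc k) - \<beta> * S_ab \<alpha> \<beta> m k"
proof -
  define p where "p j = pochhammer (- \<alpha> - \<beta> * real j) m" for j
  have split: "pochhammer (- \<alpha> - \<beta> * real j) (Suc m)
      = (real m - \<alpha> - \<beta> * real (Suc k)) * p j + \<beta> * ((real (Suc k) - real j) * p j)" for j
    by (simp add: p_def pochhammer_Suc algebra_simps)
  have "forward_difference (Suc k) (\<lambda>j. pochhammer (- \<alpha> - \<beta> * real j) (Suc m))
      = (real m - \<alpha> - \<beta> * real (Suc k)) * forward_difference (Suc k) p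
        - \<beta> * real (Suc k) * forward_difference k p"
    unfolding split forward_difference_linear forward_difference_weighted_Suc
    by (simp add: algebra_simps)
  then have "S_ab \<alpha> \<beta> (Suc m) (Suc k)
      = (real m - \<alpha> - \<beta> * real (Suc k)) * (forward_difference (Suc k) p / fact (Suc k))
        - \<beta> * (forward_difference k p / fact k)"
    by (simp add: S_ab_eq_forward_difference diff_divide_distrib flip: p_def)
  then show ?thesis
    by (simp add: S_ab_eq_forward_difference p_def[abs_def])
qed

lemma S_ab_eq_0: "m < k \<Longrightarrow> S_ab \<alpha> \<beta> m k = 0"
proof (induction m arbitrary: k)
  case 0
  then show ?case by (simp add: S_ab_eq_forward_difference forward_difference_const)
next
  case (Suc m)
  then obtain k' where "k = Suc k'" by (cases k) auto
  with Suc show ?case by (simp add: S_ab_Suc_Suc)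
qed

lemma one_minus_t_pow_nth: "one_minus_t_pow c $ n = pochhammer (- c) n / fact n"
  unfolding one_minus_t_pow_def fps_compose_uminus'
  by (simp add: gbinomial_pochhammer)

lemma one_minus_t_pow_add: "one_minus_t_pow a * one_minus_t_pow b = one_minus_t_pow (a + b)"
  unfolding one_minus_t_pow_def
  by (simp add: fps_compose_mult_distrib[symmetric] fps_binomial_add_mult)

lemma one_minus_t_pow_0: "one_minus_t_pow 0 = 1"
  by (simp add: fps_eq_iff one_minus_t_pow_nth pochhammer_0_left)

lemma fps_deriv_one_minus_t_pow:
  "fps_deriv (one_minus_t_pow c) = - fps_const c * one_minus_t_pow (c - 1)"
proof (rule fps_ext)
  fix n
  have "fps_deriv (one_minus_t_pow c) $ n = real (Suc n) * (pochhammer (- c) (Suc n) / fact (Suc n))"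
    by (simp add: one_minus_t_pow_nth)
  also have "\<dots> = - c * (pochhammer (- c + 1) n / fact n)"
    by (simp add: pochhammer_rec field_simps del: of_nat_Suc)
  finally show "fps_deriv (one_minus_t_pow c) $ n = (- fps_const c * one_minus_t_pow (c - 1)) $ n"
    by (simp add: one_minus_t_pow_nth)
qed

lemma fact_mult_one_minus_t_pow_nth:
  "fact n * (F * one_minus_t_pow c) $ n
     = (\<Sum>j=0..n. real (n choose j) * pochhammer (- c) (n - j) * (fact j * F $ j))"
  unfolding fps_mult_nth one_minus_t_pow_nth sum_distrib_left
proof (rule sum.cong[OF refl])
  fix j assume "j \<in> {0..n}"
  then have "real (n choose j) = fact n / (fact j * fact (n - j))"
    by (simp add: binomial_fact)
  then show "fact n * (F $ j * (pochhammer (- c) (n - j) / fact (n - j)))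
      = real (n choose j) * pochhammer (- c) (n - j) * (fact j * F $ j)"
    by (simp add: field_simps)
qed

lemma fps_nth_deriv_nth_deriv: "fps_nth_deriv n (fps_nth_deriv m f) = fps_nth_deriv (m + n) f"
  by (induction m arbitrary: f) simp_all

definition P_gf_log_deriv :: "real \<Rightarrow> real \<Rightarrow> real \<Rightarrow> real fps" where
  "P_gf_log_deriv \<alpha> \<beta> x =
     - fps_const \<alpha> * one_minus_t_pow (- 1) - fps_const (\<beta> * x) * one_minus_t_pow (\<beta> - 1)"

lemma fps_deriv_P_gf: "fps_deriv (P_gf \<alpha> \<beta> x) = P_gf \<alpha> \<beta> x * P_gf_log_deriv \<alpha> \<beta> x"
proof -
  define E where "E = fps_exp x oo (one_minus_t_pow \<beta> - 1)"
  have z: "(one_minus_t_pow \<beta> - 1) $ 0 = 0"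
    by (simp add: one_minus_t_pow_nth)
  have "fps_deriv E = fps_const x * E * fps_deriv (one_minus_t_pow \<beta>)"
    unfolding E_def fps_compose_deriv[OF z] fps_exp_deriv fps_compose_mult_distrib[OF z] by simp
  moreover have "one_minus_t_pow (\<alpha> - 1) = one_minus_t_pow \<alpha> * one_minus_t_pow (- 1)"
    by (simp add: one_minus_t_pow_add)
  ultimately show ?thesis
    unfolding P_gf_def P_gf_log_deriv_def fps_deriv_mult E_def[symmetric] fps_deriv_one_minus_t_pow
    by (simp del: fps_const_neg add: algebra_simps)
qed

lemma fps_deriv_one_minus_t_pow_log_deriv:
  "fps_deriv (one_minus_t_pow a) + one_minus_t_pow a * P_gf_log_deriv \<alpha> \<beta> x
     = - fps_const (a + \<alpha>) * one_minus_t_pow (a - 1) - fps_const (\<beta> * x) * one_minus_t_pow (a + \<beta> - 1)"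
proof -
  have "fps_deriv (one_minus_t_pow a) + one_minus_t_pow a * P_gf_log_deriv \<alpha> \<beta> x
      = - fps_const a * one_minus_t_pow (a - 1) - fps_const \<alpha> * (one_minus_t_pow a * one_minus_t_pow (- 1))
        - fps_const (\<beta> * x) * (one_minus_t_pow a * one_minus_t_pow (\<beta> - 1))"
    by (simp del: fps_const_neg add: P_gf_log_deriv_def fps_deriv_one_minus_t_pow algebra_simps)
  also have "\<dots> = - fps_const a * one_minus_t_pow (a - 1) - fps_const \<alpha> * one_minus_t_pow (a - 1)
        - fps_const (\<beta> * x) * one_minus_t_pow (a + \<beta> - 1)"
    by (simp add: one_minus_t_pow_add add_diff_eq)
  finally show ?thesis
    by (simp del: fps_const_neg fps_const_add add: ring_distribs flip: fps_const_add)
qed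

definition P_gf_deriv_ratio :: "real \<Rightarrow> real \<Rightarrow> real \<Rightarrow> nat \<Rightarrow> real fps" where
  "P_gf_deriv_ratio \<alpha> \<beta> x m =
     (\<Sum>k=0..m. fps_const (S_ab \<alpha> \<beta> m k * x ^ k) * one_minus_t_pow (\<beta> * real k - real m))"

lemma P_gf_deriv_ratio_Suc:
  "fps_deriv (P_gf_deriv_ratio \<alpha> \<beta> x m) + P_gf_deriv_ratio \<alpha> \<beta> x m * P_gf_log_deriv \<alpha> \<beta> x
     = P_gf_deriv_ratio \<alpha> \<beta> x (Suc m)"
proof -
  define c where "c k = S_ab \<alpha> \<beta> m k * x ^ k" for k
  define T where "T k = one_minus_t_pow (\<beta> * real k - real (Suc m))" for k
  define A where "A k = fps_const (c k * (real m - \<alpha> - \<beta> * real k)) * T k" for k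
  define B where "B k = fps_const (\<beta> * x * c k) * T (Suc k)" for k
  have summand: "fps_deriv (fps_const (c k) * one_minus_t_pow (\<beta> * real k - real m))
      + fps_const (c k) * one_minus_t_pow (\<beta> * real k - real m) * P_gf_log_deriv \<alpha> \<beta> x = A k - B k" for k
  proof -
    have "one_minus_t_pow (\<beta> * real k - real m - 1) = T k"
      "one_minus_t_pow (\<beta> * real k - real m + \<beta> - 1) = T (Suc k)"
      by (simp_all add: T_def algebra_simps)
    then have "fps_deriv (one_minus_t_pow (\<beta> * real k - real m))
        + one_minus_t_pow (\<beta> * real k - real m) * P_gf_log_deriv \<alpha> \<beta> x
        = - fps_const (\<beta> * real k - real m + \<alpha>) * T k - fps_const (\<beta> * x) * T (Suc k)"
      by (simp only: fps_deriv_one_minus_t_pow_log_deriv)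
    then have "fps_deriv (fps_const (c k) * one_minus_t_pow (\<beta> * real k - real m))
        + fps_const (c k) * one_minus_t_pow (\<beta> * real k - real m) * P_gf_log_deriv \<alpha> \<beta> x
        = fps_const (c k) * (- fps_const (\<beta> * real k - real m + \<alpha>) * T k - fps_const (\<beta> * x) * T (Suc k))"
      by (simp only: fps_deriv_mult_const_left mult.assoc flip: distrib_left)
    also have "\<dots> = A k - B k"
      by (rule fps_ext) (simp add: A_def B_def algebra_simps)
    finally show ?thesis .
  qed
  have "fps_deriv (P_gf_deriv_ratio \<alpha> \<beta> x m) + P_gf_deriv_ratio \<alpha> \<beta> x m * P_gf_log_deriv \<alpha> \<beta> x
      = (\<Sum>k=0..m. fps_deriv (fps_const (c k) * one_minus_t_pow (\<beta> * real k - real m))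
          + fps_const (c k) * one_minus_t_pow (\<beta> * real k - real m) * P_gf_log_deriv \<alpha> \<beta> x)"
    unfolding P_gf_deriv_ratio_def c_def fps_deriv_sum sum_distrib_right sum.distrib ..
  also have "\<dots> = (\<Sum>k=0..m. A k) - (\<Sum>k=0..m. B k)"
    unfolding summand by (rule sum_subtractf)
  also have "(\<Sum>k=0..m. A k) = (\<Sum>k=0..Suc m. A k)"
    by (simp add: A_def c_def S_ab_eq_0)
  also have "\<dots> = A 0 + (\<Sum>k=0..m. A (Suc k))"
    unfolding sum.atLeast0_atMost_Suc_shift comp_def ..
  also have "A 0 + (\<Sum>k=0..m. A (Suc k)) - (\<Sum>k=0..m. B k) = A 0 + (\<Sum>k=0..m. A (Suc k) - B k)"
    by (simp add: sum_subtractf)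
  also have "\<dots> = P_gf_deriv_ratio \<alpha> \<beta> x (Suc m)"
    unfolding P_gf_deriv_ratio_def sum.atLeast0_atMost_Suc_shift comp_def
  proof (intro arg_cong2[where f = "(+)"] sum.cong[OF refl])
    show "A 0 = fps_const (S_ab \<alpha> \<beta> (Suc m) 0 * x ^ 0) * one_minus_t_pow (\<beta> * real 0 - real (Suc m))"
      by (simp add: A_def c_def T_def S_ab_Suc_0 mult.commute)
    fix k
    have "S_ab \<alpha> \<beta> (Suc m) (Suc k) * x ^ Suc k = c (Suc k) * (real m - \<alpha> - \<beta> * real (Suc k)) - \<beta> * x * c k"
      by (simp add: c_def S_ab_Suc_Suc algebra_simps)
    then show "A (Suc k) - B k = fps_const (S_ab \<alpha> \<beta> (Suc m) (Suc k) * x ^ Suc k)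
        * one_minus_t_pow (\<beta> * real (Suc k) - real (Suc m))"
      by (simp add: A_def B_def T_def flip: left_diff_distrib fps_const_sub)
  qed
  finally show ?thesis .
qed

lemma fps_nth_deriv_P_gf:
  "fps_nth_deriv m (P_gf \<alpha> \<beta> x) = P_gf_deriv_ratio \<alpha> \<beta> x m * P_gf \<alpha> \<beta> x"
proof (induction m)
  case 0
  show ?case by (simp add: P_gf_deriv_ratio_def S_ab_def one_minus_t_pow_0)
next
  case (Suc m)
  have "fps_nth_deriv (Suc m) (P_gf \<alpha> \<beta> x) = fps_deriv (P_gf_deriv_ratio \<alpha> \<beta> x m * P_gf \<alpha> \<beta> x)"
    by (simp only: fps_nth_deriv_commute Suc.IH)
  also have "\<dots> = (fps_deriv (P_gf_deriv_ratio \<alpha> \<beta> x m)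
      + P_gf_deriv_ratio \<alpha> \<beta> x m * P_gf_log_deriv \<alpha> \<beta> x) * P_gf \<alpha> \<beta> x"
    by (simp add: fps_deriv_mult fps_deriv_P_gf algebra_simps)
  finally show ?case by (simp only: P_gf_deriv_ratio_Suc)
qed

lemma P_poly_add:
  "P_poly \<alpha> \<beta> (n + m) x =
     (\<Sum>j=0..n. \<Sum>k=0..m. real (n choose j) * pochhammer (real m - \<beta> * real k) (n - j)
        * S_ab \<alpha> \<beta> m k * x ^ k * P_poly \<alpha> \<beta> j x)"
proof -
  define F where "F = P_gf \<alpha> \<beta> x"
  have "P_poly \<alpha> \<beta> (n + m) x = fps_nth_deriv n (fps_nth_deriv m F) $ 0"
    by (simp add: P_poly_def F_def fps_nth_deriv_nth_deriv fps_deriv_maclauren_0 add.commute)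
  also have "\<dots> = fact n * (\<Sum>k=0..m. fps_const (S_ab \<alpha> \<beta> m k * x ^ k)
      * (F * one_minus_t_pow (\<beta> * real k - real m))) $ n"
    unfolding F_def fps_nth_deriv_P_gf fps_deriv_maclauren_0 P_gf_deriv_ratio_def
    by (simp add: sum_distrib_left sum_distrib_right mult.commute mult.left_commute)
  also have "\<dots> = (\<Sum>k=0..m. S_ab \<alpha> \<beta> m k * x ^ k * (fact n * (F * one_minus_t_pow (\<beta> * real k - real m)) $ n))"
    by (simp only: fps_sum_nth fps_mult_left_const_nth sum_distrib_left) (simp add: mult_ac)
  also have "\<dots> = (\<Sum>k=0..m. \<Sum>j=0..n. real (n choose j) * pochhammer (real m - \<beta> * real k) (n - j)
      * S_ab \<alpha> \<beta> m k * x ^ k * P_poly \<alpha> \<beta> j x)"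
    by (simp add: fact_mult_one_minus_t_pow_nth sum_distrib_left P_poly_def F_def mult_ac)
  finally show ?thesis
    by (simp add: sum.swap[of _ "{0..m}"])
qed

lemma P_poly_add_one:
  "P_poly \<alpha> \<beta> (n + 1) x =
     - (\<Sum>j=0..n. real (n choose j) *
         (\<alpha> * fact (n - j) + \<beta> * x * pochhammer (1 - \<beta>) (n - j)) * P_poly \<alpha> \<beta> j x)"
proof -
  have S_1: "S_ab \<alpha> \<beta> (Suc 0) 0 = - \<alpha>" "S_ab \<alpha> \<beta> (Suc 0) (Suc 0) = - \<beta>"
    by (simp_all add: S_ab_def)
  have "P_poly \<alpha> \<beta> (n + 1) x =
      (\<Sum>j=0..n. \<Sum>k=0..1. real (n choose j) * pochhammer (1 - \<beta> * real k) (n - j)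
         * S_ab \<alpha> \<beta> 1 k * x ^ k * P_poly \<alpha> \<beta> j x)"
    using P_poly_add[of \<alpha> \<beta> n 1 x] by simp
  then show ?thesis
    by (simp add: S_1 algebra_simps flip: sum_negf pochhammer_fact)
qed

theorem mainTheorem12:
  fixes \<alpha> \<beta> x :: real and n m :: nat
  assumes "\<beta> \<noteq> 0"
  shows "P_poly \<alpha> \<beta> (n + m) x =
           (\<Sum>j=0..n. \<Sum>k=0..m. real (n choose j) * pochhammer (real m - \<beta> * real k) (n - j)
               * S_ab \<alpha> \<beta> m k * x ^ k * P_poly \<alpha> \<beta> j x)
       \<and> P_poly \<alpha> \<beta> (n + 1) x =
           - (\<Sum>j=0..n. real (n choose j) *
               (\<alpha> * fact (n - j) + \<beta> * x * pochhammer (1 - \<beta>) (n - j)) * P_poly \<alpha> \<beta> j x)"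
  using P_poly_add P_poly_add_one by blast

end
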